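(* Assume $N\ge2$ and that conditions A and D' hold for the stochastic matrices $(p_{ij}(\varepsilon))_{i,j\in\mathbb{X}}$, $\varepsilon\in(0,\varepsilon_0]$, and let $\delta^\circ=\min_{i\in\mathbb{X},\,j\in\mathbb{Y}_i}\delta_{ij}$. Then for every $r\in\mathbb{X}$ the reduced matrices $({}_rp_{ij}(\varepsilon))_{i,j\in{}_r\mathbb{X}}$, $\varepsilon\in(0,\varepsilon_0]$, also satisfy condition A (on the state space ${}_r\mathbb{X}$, with the same $\varepsilon_0$ and transition sets ${}_r\mathbb{Y}_i$) and condition D'; that is, for every $i\in{}_r\mathbb{X}$, $j\in{}_r\mathbb{Y}_i$ there are integers $0\le{}_rl^-_{ij}\le{}_rl^+_{ij}$, reals ${}_ra_{ij}[l]$ with ${}_ra_{ij}[{}_rl^-_{ij}]>0$, and ${}_r\delta_{ij}\in(0,1]$, ${}_rG_{ij}\in(0,\infty)$, ${}_r\varepsilon_{ij}\in(0,\varepsilon_0]$ such that $\big|{}_rp_{ij}(\varepsilon)-\sum_{l={}_rl^-_{ij}}^{{}_rl^+_{ij}}{}_ra_{ij}[l]\varepsilon^l\big|\le{}_rG_{ij}\varepsilon^{{}_rl^+_{ij}+{}_r\delta_{ij}}$ for $0<\varepsilon\le{}_r\varepsilon_{ij}$. Moreover this holds with ${}_r\delta_{ij}\ge\delta^\circ$ for all $j\in{}_r\mathbb{Y}_i$, $i\in{}_r\mathbb{X}$, $r\in\mathbb{X}$.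
   Context: Let $\mathbb{X}=\{1,\dots,N\}$, $0<\varepsilon_0\le1$, and for each $\varepsilon\in(0,\varepsilon_0]$ let $(p_{ij}(\varepsilon))_{i,j\in\mathbb{X}}$ be a stochastic matrix. Condition A: there are nonempty sets $\mathbb{Y}_i\subseteq\mathbb{X}$ such that (a) $p_{ij}(\varepsilon)>0$ for $j\in\mathbb{Y}_i$ and all $\varepsilon\in(0,\varepsilon_0]$; (b) $p_{ij}(\varepsilon)=0$ for $j\notin\mathbb{Y}_i$; (c) for every $i,j$ there exist $n\ge1$ and $i=l_0,\dots,l_n=j$ with $l_m\in\mathbb{Y}_{l_{m-1}}$. Condition D': for all $i$ and $j\in\mathbb{Y}_i$, $p_{ij}(\varepsilon)=\sum_{l=l^-_{ij}}^{l^+_{ij}}a_{ij}[l]\varepsilon^l+o_{ij}(\varepsilon)$ on $(0,\varepsilon_0]$ with integers $0\le l^-_{ij}\le l^+_{ij}$, $a_{ij}[l^-_{ij}]>0$, and $|o_{ij}(\varepsilon)|\le G_{ij}\varepsilon^{l^+_{ij}+\delta_{ij}}$ for $0<\varepsilon\le\varepsilon_{ij}$, where $\delta_{ij}\in(0,1]$, $G_{ij}\in(0,\infty)$, $\varepsilon_{ij}\in(0,\varepsilon_0]$. (Under A, $p_{rr}(\varepsilon)<1$.) Reduced chain: for $r\in\mathbb{X}$ let ${}_r\mathbb{X}=\mathbb{X}\setminus\{r\}$ and ${}_rp_{ij}(\varepsilon)=p_{ij}(\varepsilon)+p_{ir}(\varepsilon)\frac{p_{rj}(\varepsilon)}{1-p_{rr}(\varepsilon)}$,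 $i,j\in{}_r\mathbb{X}$ (the transition probabilities of the chain observed only at visits to ${}_r\mathbb{X}$). Its transition sets are ${}_r\mathbb{Y}_i=\{j\in{}_r\mathbb{X}: j\in\mathbb{Y}_i\ \text{or}\ (r\in\mathbb{Y}_i\text{ and }j\in\mathbb{Y}_r)\}$, $i\in{}_r\mathbb{X}$. Conditions A and D' for the reduced chain mean the same conditions with $\mathbb{X},p_{ij},\mathbb{Y}_i$ replaced by ${}_r\mathbb{X},{}_rp_{ij},{}_r\mathbb{Y}_i$. *)

theory Defs
  imports Complex_Main
begin

text \<open>States are natural numbers; the state space is a finite set S (X = {1..N}).
  A family of matrices is p :: real => nat => nat => real, p eps i j.\<close>

definition stochastic_family :: "nat set \<Rightarrow> real \<Rightarrow> (real \<Rightarrow> nat \<Rightarrow> nat \<Rightarrow> real) \<Rightarrow> bool" where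
  "stochastic_family S eps0 p \<longleftrightarrow>
     (\<forall>eps\<in>{0<..eps0}. (\<forall>i\<in>S. \<forall>j\<in>S. 0 \<le> p eps i j) \<and> (\<forall>i\<in>S. (\<Sum>j\<in>S. p eps i j) = 1))"

definition condition_A :: "nat set \<Rightarrow> real \<Rightarrow> (real \<Rightarrow> nat \<Rightarrow> nat \<Rightarrow> real) \<Rightarrow> (nat \<Rightarrow> nat set) \<Rightarrow> bool" where
  "condition_A S eps0 p Y \<longleftrightarrow>
     (\<forall>i\<in>S. Y i \<noteq> {} \<and> Y i \<subseteq> S) \<and>
     (\<forall>i\<in>S. \<forall>j\<in>Y i. \<forall>eps\<in>{0<..eps0}. p eps i j > 0) \<and>
     (\<forall>i\<in>S. \<forall>j\<in>S - Y i. \<forall>eps\<in>{0<..eps0}. p eps i j = 0) \<and>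
     (\<forall>i\<in>S. \<forall>j\<in>S. \<exists>n::nat. \<exists>l::nat \<Rightarrow> nat. n \<ge> 1 \<and> l 0 = i \<and> l n = j \<and>
          (\<forall>m\<in>{1..n}. l m \<in> Y (l (m - 1))))"

definition expansion_D' :: "real \<Rightarrow> (real \<Rightarrow> nat \<Rightarrow> nat \<Rightarrow> real) \<Rightarrow> nat \<Rightarrow> nat \<Rightarrow> real \<Rightarrow> bool" where
  "expansion_D' eps0 p i j \<delta> \<longleftrightarrow>
     (\<exists>lm lp :: nat. \<exists>a :: nat \<Rightarrow> real. \<exists>G eps_ij :: real.
        lm \<le> lp \<and> a lm > 0 \<and> 0 < \<delta> \<and> \<delta> \<le> 1 \<and> 0 < G \<and> 0 < eps_ij \<and> eps_ij \<le> eps0 \<and>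
        (\<forall>eps\<in>{0<..eps_ij}.
           \<bar>p eps i j - (\<Sum>l=lm..lp. a l * eps ^ l)\<bar> \<le> G * eps powr (real lp + \<delta>)))"

definition condition_D' :: "nat set \<Rightarrow> real \<Rightarrow> (real \<Rightarrow> nat \<Rightarrow> nat \<Rightarrow> real) \<Rightarrow> (nat \<Rightarrow> nat set) \<Rightarrow> bool" where
  "condition_D' S eps0 p Y \<longleftrightarrow> (\<forall>i\<in>S. \<forall>j\<in>Y i. \<exists>\<delta>. expansion_D' eps0 p i j \<delta>)"

definition reduced_p :: "(real \<Rightarrow> nat \<Rightarrow> nat \<Rightarrow> real) \<Rightarrow> nat \<Rightarrow> real \<Rightarrow> nat \<Rightarrow> nat \<Rightarrow> real" where
  "reduced_p p r eps i j = p eps i j + p eps i r * (p eps r j / (1 - p eps r r))"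

definition reduced_Y :: "nat set \<Rightarrow> (nat \<Rightarrow> nat set) \<Rightarrow> nat \<Rightarrow> nat \<Rightarrow> nat set" where
  "reduced_Y S Y r i = {j \<in> S - {r}. j \<in> Y i \<or> (r \<in> Y i \<and> j \<in> Y r)}"

end

theory Submission
  imports Defs
begin

text \<open>Under condition D' every transition probability has a leading term: near 0 it equals
  \<open>c \<epsilon>^m\<close> with \<open>c > 0\<close> up to a remainder \<open>O(\<epsilon>^(m + \<delta>))\<close>, and conversely such a leading
  term is an expansion as in D'. For fixed \<open>\<delta> \<le> 1\<close> these functions are closed under sums,
  products, and quotients whose denominator is of no higher order than the numerator. Since
  \<open>1 - p r r\<close> is the sum of the exit probabilities \<open>p r k\<close>, \<open>k \<noteq> r\<close>, each of which it bounds
  from above, the reduced probabilities \<open>p i j + p i r * p r j / (1 - p r r)\<close> again have leading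
  terms, with the common exponent \<open>\<delta>\<^sup>\<circ> = min \<delta> i j\<close>. Condition A carries over because every
  visit of a path to r can be short-cut by a single transition of the reduced chain.\<close>

section \<open>Leading terms\<close>

definition leading_term :: "real \<Rightarrow> (real \<Rightarrow> real) \<Rightarrow> nat \<Rightarrow> real \<Rightarrow> bool" where
  "leading_term d f m c \<longleftrightarrow> c > 0 \<and>
     (\<exists>G\<ge>0. \<forall>\<^sub>F e in at_right 0. \<bar>f e - c * e ^ m\<bar> \<le> G * e ^ m * e powr d)"

lemma eventually_at_right_0_le:
  "0 < t \<Longrightarrow> \<forall>\<^sub>F e in at_right 0. 0 < e \<and> e \<le> (t::real)"
  using eventually_at_right_real[of 0 t] by (rule eventually_mono) auto

lemma eventually_powr_less:
  assumes "0 < d" "0 < K"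
  shows "\<forall>\<^sub>F e in at_right 0. (e::real) powr d < K"
proof -
  have "((\<lambda>e::real. e powr d) \<longlongrightarrow> 0) (at_right 0)"
    using assms(1) eventually_at_right_less[of 0]
    by (intro tendsto_zero_powrI tendsto_ident_at) (auto elim: eventually_mono)
  from order_tendstoD(2)[OF this assms(2)] show ?thesis .
qed

lemma power_le_power_times_powr:
  fixes e d :: real
  assumes "0 < e" "e \<le> 1" "d \<le> 1" "a < b"
  shows "e ^ b \<le> e ^ a * e powr d"
proof -
  have "e ^ b \<le> e ^ Suc a" using assms by (intro power_decreasing) auto
  also have "\<dots> = e ^ a * e powr 1" using assms by simp
  also have "\<dots> \<le> e ^ a * e powr d" using assms by (intro mult_left_mono powr_mono') auto
  finally show ?thesis .
qed

lemma leading_term_cong: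
  assumes "leading_term d f m c" "\<forall>\<^sub>F e in at_right 0. f e = g e"
  shows "leading_term d g m c"
proof -
  obtain G where "c > 0" "G \<ge> 0" and G: "\<forall>\<^sub>F e in at_right 0. \<bar>f e - c * e ^ m\<bar> \<le> G * e ^ m * e powr d"
    using assms(1) unfolding leading_term_def by blast
  moreover have "\<forall>\<^sub>F e in at_right 0. \<bar>g e - c * e ^ m\<bar> \<le> G * e ^ m * e powr d"
    using G assms(2) by eventually_elim simp
  ultimately show ?thesis unfolding leading_term_def by blast
qed

lemma leading_term_mono_powr:
  assumes "leading_term d f m c" "0 < d'" "d' \<le> d"
  shows "leading_term d' f m c"
proof -
  obtain G where "c > 0" "G \<ge> 0" and G: "\<forall>\<^sub>F e in at_right 0. \<bar>f e - c * e ^ m\<bar> \<le> G * e ^ m * e powr d"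
    using assms(1) unfolding leading_term_def by blast
  moreover have "\<forall>\<^sub>F e in at_right 0. \<bar>f e - c * e ^ m\<bar> \<le> G * e ^ m * e powr d'"
    using G eventually_at_right_0_le[OF zero_less_one]
  proof eventually_elim
    case (elim e)
    then have "e powr d \<le> e powr d'" using assms by (intro powr_mono') auto
    then have "G * e ^ m * e powr d \<le> G * e ^ m * e powr d'"
      using elim \<open>G \<ge> 0\<close> by (intro mult_left_mono) auto
    then show ?case using elim by linarith
  qed
  ultimately show ?thesis unfolding leading_term_def by blast
qed

lemma leading_term_bounds:
  assumes "leading_term d f m c" "0 < d"
  shows "\<forall>\<^sub>F e in at_right 0. c / 2 * e ^ m \<le> f e \<and> f e \<le> 3 * c / 2 * e ^ m"
proof -
  obtain G where "c > 0" "G \<ge> 0" and G: "\<forall>\<^sub>F e in at_right 0. \<bar>f e - c * e ^ m\<bar> \<le> G * e ^ m * e powr d"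
    using assms(1) unfolding leading_term_def by blast
  have K: "c / (2 * (G + 1)) > 0" using \<open>c > 0\<close> \<open>G \<ge> 0\<close> by simp
  from G eventually_powr_less[OF assms(2) K] eventually_at_right_0_le[OF zero_less_one]
  show ?thesis
  proof eventually_elim
    case (elim e)
    have "G * e powr d \<le> (G + 1) * e powr d" by (simp add: distrib_right)
    also have "\<dots> \<le> (G + 1) * (c / (2 * (G + 1)))"
      using elim \<open>G \<ge> 0\<close> by (intro mult_left_mono) auto
    also have "\<dots> = c / 2" using \<open>G \<ge> 0\<close> by (simp add: field_simps)
    finally have "G * e powr d * e ^ m \<le> c / 2 * e ^ m"
      using elim by (intro mult_right_mono) auto
    moreover have "G * e ^ m * e powr d = G * e powr d * e ^ m" by (simp only: ac_simps)
    ultimately show ?case using elim by linarith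
  qed
qed

lemma leading_term_add:
  assumes f: "leading_term d f a c1" and g: "leading_term d g b c2"
    and "a \<le> b" "d \<le> 1"
  shows "leading_term d (\<lambda>e. f e + g e) a (c1 + (if a = b then c2 else 0))"
proof -
  obtain G1 where "c1 > 0" "G1 \<ge> 0"
    and G1: "\<forall>\<^sub>F e in at_right 0. \<bar>f e - c1 * e ^ a\<bar> \<le> G1 * e ^ a * e powr d"
    using f unfolding leading_term_def by blast
  obtain G2 where "c2 > 0" "G2 \<ge> 0"
    and G2: "\<forall>\<^sub>F e in at_right 0. \<bar>g e - c2 * e ^ b\<bar> \<le> G2 * e ^ b * e powr d"
    using g unfolding leading_term_def by blast
  let ?c = "c1 + (if a = b then c2 else 0)"
  have "\<forall>\<^sub>F e in at_right 0. \<bar>f e + g e - ?c * e ^ a\<bar> \<le> (G1 + G2 + c2) * e ^ a * e powr d"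
    using G1 G2 eventually_at_right_0_le[OF zero_less_one]
  proof eventually_elim
    case (elim e)
    have "e ^ b \<le> e ^ a" using elim \<open>a \<le> b\<close> by (intro power_decreasing) auto
    then have "G2 * e ^ b * e powr d \<le> G2 * e ^ a * e powr d"
      using \<open>G2 \<ge> 0\<close> by (intro mult_right_mono mult_left_mono) auto
    moreover have "\<bar>(if a = b then 0 else c2 * e ^ b)\<bar> \<le> c2 * e ^ a * e powr d"
      using elim \<open>a \<le> b\<close> \<open>c2 > 0\<close> \<open>d \<le> 1\<close> power_le_power_times_powr[of e d a b]
      by (auto simp: mult.assoc)
    moreover have "f e + g e - ?c * e ^ a
        = (f e - c1 * e ^ a) + (g e - c2 * e ^ b) + (if a = b then 0 else c2 * e ^ b)"
      by (simp add: algebra_simps)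
    ultimately have "\<bar>f e + g e - ?c * e ^ a\<bar>
        \<le> G1 * e ^ a * e powr d + G2 * e ^ a * e powr d + c2 * e ^ a * e powr d"
      using elim by linarith
    then show ?case by (simp add: algebra_simps)
  qed
  moreover have "?c > 0" using \<open>c1 > 0\<close> \<open>c2 > 0\<close> by simp
  ultimately show ?thesis
    unfolding leading_term_def using \<open>G1 \<ge> 0\<close> \<open>G2 \<ge> 0\<close> \<open>c2 > 0\<close>
    by (intro conjI exI[of _ "G1 + G2 + c2"]) auto
qed

lemma leading_term_add_ex:
  assumes "leading_term d f a c1" "leading_term d g b c2" "d \<le> 1"
  shows "\<exists>m c. leading_term d (\<lambda>e. f e + g e) m c"
proof (cases "a \<le> b")
  case True
  then show ?thesis using leading_term_add[OF assms(1,2) _ assms(3)] by blast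
next
  case False
  then show ?thesis using leading_term_add[OF assms(2,1) _ assms(3)] by (auto simp: add.commute)
qed

lemma leading_term_sum_ex:
  assumes "finite A" "A \<noteq> {}" "\<forall>k\<in>A. \<exists>m c. leading_term d (f k) m c" "d \<le> 1"
  shows "\<exists>m c. leading_term d (\<lambda>e. \<Sum>k\<in>A. f k e) m c"
  using assms(1-3)
proof (induction A rule: finite_ne_induct)
  case (insert x F)
  then obtain m1 c1 m2 c2
    where "leading_term d (f x) m1 c1" "leading_term d (\<lambda>e. \<Sum>k\<in>F. f k e) m2 c2"
    by blast
  from leading_term_add_ex[OF this assms(4)] show ?case using insert by simp
qed simp

lemma leading_term_mult:
  assumes f: "leading_term d f a c1" and g: "leading_term d g b c2" and "0 < d"
  shows "leading_term d (\<lambda>e. f e * g e) (a + b) (c1 * c2)"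
proof -
  obtain G1 where "c1 > 0" "G1 \<ge> 0"
    and G1: "\<forall>\<^sub>F e in at_right 0. \<bar>f e - c1 * e ^ a\<bar> \<le> G1 * e ^ a * e powr d"
    using f unfolding leading_term_def by blast
  obtain G2 where "c2 > 0" "G2 \<ge> 0"
    and G2: "\<forall>\<^sub>F e in at_right 0. \<bar>g e - c2 * e ^ b\<bar> \<le> G2 * e ^ b * e powr d"
    using g unfolding leading_term_def by blast
  define G where "G = 3 / 2 * G1 * c2 + c1 * G2"
  have "\<forall>\<^sub>F e in at_right 0. \<bar>f e * g e - c1 * c2 * e ^ (a + b)\<bar> \<le> G * e ^ (a + b) * e powr d"
    using G1 G2 leading_term_bounds[OF g \<open>0 < d\<close>] eventually_at_right_0_le[OF zero_less_one]
  proof eventually_elim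
    case (elim e)
    have "\<bar>(f e - c1 * e ^ a) * g e\<bar> \<le> (G1 * e ^ a * e powr d) * (3 * c2 / 2 * e ^ b)"
      unfolding abs_mult using elim \<open>c2 > 0\<close> by (intro mult_mono) auto
    moreover have "\<bar>c1 * e ^ a * (g e - c2 * e ^ b)\<bar> \<le> c1 * e ^ a * (G2 * e ^ b * e powr d)"
      unfolding abs_mult using elim \<open>c1 > 0\<close> by (intro mult_mono) auto
    moreover have "f e * g e - c1 * c2 * e ^ (a + b)
        = (f e - c1 * e ^ a) * g e + c1 * e ^ a * (g e - c2 * e ^ b)"
      by (simp add: algebra_simps power_add)
    ultimately have "\<bar>f e * g e - c1 * c2 * e ^ (a + b)\<bar>
        \<le> (G1 * e ^ a * e powr d) * (3 * c2 / 2 * e ^ b) + c1 * e ^ a * (G2 * e ^ b * e powr d)"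
      by linarith
    also have "\<dots> = G * e ^ (a + b) * e powr d"
      unfolding G_def by (simp add: algebra_simps power_add)
    finally show ?case .
  qed
  then show ?thesis
    unfolding leading_term_def G_def using \<open>c1 > 0\<close> \<open>c2 > 0\<close> \<open>G1 \<ge> 0\<close> \<open>G2 \<ge> 0\<close>
    by (intro conjI exI[of _ "3 / 2 * G1 * c2 + c1 * G2"]) auto
qed

lemma leading_term_divide:
  assumes f: "leading_term d f a c1" and h: "leading_term d h b c2" and "b \<le> a" "0 < d"
  shows "leading_term d (\<lambda>e. f e / h e) (a - b) (c1 / c2)"
proof -
  obtain G1 where "c1 > 0" "G1 \<ge> 0"
    and G1: "\<forall>\<^sub>F e in at_right 0. \<bar>f e - c1 * e ^ a\<bar> \<le> G1 * e ^ a * e powr d"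
    using f unfolding leading_term_def by blast
  obtain G2 where "c2 > 0" "G2 \<ge> 0"
    and G2: "\<forall>\<^sub>F e in at_right 0. \<bar>h e - c2 * e ^ b\<bar> \<le> G2 * e ^ b * e powr d"
    using h unfolding leading_term_def by blast
  define k where "k = a - b"
  have a: "a = k + b" using \<open>b \<le> a\<close> unfolding k_def by simp
  define G where "G = 2 * (c2 * G1 + c1 * G2) / c2\<^sup>2"
  have "\<forall>\<^sub>F e in at_right 0. \<bar>f e / h e - c1 / c2 * e ^ k\<bar> \<le> G * e ^ k * e powr d"
    using G1 G2 leading_term_bounds[OF h \<open>0 < d\<close>] eventually_at_right_0_le[OF zero_less_one]
  proof eventually_elim
    case (elim e)
    have "c2 / 2 * e ^ b > 0" using elim \<open>c2 > 0\<close> by simp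
    then have "h e > 0" using elim by linarith
    then have "f e / h e - c1 / c2 * e ^ k
        = (c2 * (f e - c1 * e ^ a) - c1 * e ^ k * (h e - c2 * e ^ b)) / (c2 * h e)"
      using \<open>c2 > 0\<close> unfolding a by (simp add: field_simps power_add)
    also have "\<bar>\<dots>\<bar> \<le> ((c2 * G1 + c1 * G2) * e ^ a * e powr d) / (c2 * (c2 / 2 * e ^ b))"
    proof -
      have "\<bar>c2 * (f e - c1 * e ^ a)\<bar> \<le> c2 * (G1 * e ^ a * e powr d)"
        unfolding abs_mult using elim \<open>c2 > 0\<close> by (intro mult_mono) auto
      moreover have "\<bar>c1 * e ^ k * (h e - c2 * e ^ b)\<bar> \<le> c1 * e ^ k * (G2 * e ^ b * e powr d)"
        unfolding abs_mult using elim \<open>c1 > 0\<close> by (intro mult_mono) auto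
      moreover have "c2 * (G1 * e ^ a * e powr d) + c1 * e ^ k * (G2 * e ^ b * e powr d)
          = (c2 * G1 + c1 * G2) * e ^ a * e powr d"
        unfolding a by (simp add: algebra_simps power_add)
      ultimately have "\<bar>c2 * (f e - c1 * e ^ a) - c1 * e ^ k * (h e - c2 * e ^ b)\<bar>
          \<le> (c2 * G1 + c1 * G2) * e ^ a * e powr d"
        by linarith
      moreover have "c2 * (c2 / 2 * e ^ b) \<le> \<bar>c2 * h e\<bar>"
        using elim \<open>c2 > 0\<close> \<open>h e > 0\<close> by simp
      ultimately show ?thesis
        unfolding abs_divide using \<open>c2 > 0\<close> \<open>c2 / 2 * e ^ b > 0\<close> by (intro frac_le) auto
    qed
    also have "\<dots> = G * e ^ k * e powr d"
      using elim \<open>c2 > 0\<close> unfolding G_def a by (simp add: field_simps power2_eq_square power_add)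
    finally show ?case .
  qed
  then show ?thesis
    unfolding leading_term_def G_def k_def using \<open>c1 > 0\<close> \<open>c2 > 0\<close> \<open>G1 \<ge> 0\<close> \<open>G2 \<ge> 0\<close>
    by (intro conjI exI[of _ "2 * (c2 * G1 + c1 * G2) / c2\<^sup>2"]) auto
qed

lemma leading_term_exponent_le:
  assumes f: "leading_term d f a c1" and h: "leading_term d h b c2" and "0 < d"
    and le: "\<forall>\<^sub>F e in at_right 0. f e \<le> h e"
  shows "b \<le> a"
proof (rule ccontr)
  assume "\<not> b \<le> a"
  have "c1 > 0" "c2 > 0" using f h unfolding leading_term_def by auto
  then have K: "c1 / (3 * c2) > 0" by simp
  have "\<forall>\<^sub>F e in at_right 0. c1 / 2 * e ^ a \<le> h e \<and> h e \<le> 3 * c2 / 2 * e ^ b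
      \<and> e \<in> {0<..<c1 / (3 * c2)} \<and> e \<le> 1"
    using leading_term_bounds[OF f \<open>0 < d\<close>] leading_term_bounds[OF h \<open>0 < d\<close>] le
      eventually_at_right_real[OF K] eventually_at_right_0_le[OF zero_less_one]
    by eventually_elim auto
  then obtain e where e: "c1 / 2 * e ^ a \<le> 3 * c2 / 2 * e ^ b" "0 < e" "e < c1 / (3 * c2)" "e \<le> 1"
    using eventually_happens'[OF trivial_limit_at_right_real] by force
  have "e ^ b \<le> e ^ Suc a" using e \<open>\<not> b \<le> a\<close> by (intro power_decreasing) auto
  then have "3 * c2 / 2 * e ^ b \<le> 3 * c2 / 2 * (e * e ^ a)"
    using \<open>c2 > 0\<close> by (intro mult_left_mono) auto
  moreover have "3 * c2 * e < c1" using e \<open>c2 > 0\<close> by (simp add: field_simps)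
  then have "(3 * c2 * e) * e ^ a < c1 * e ^ a" using e by (intro mult_strict_right_mono) auto
  ultimately show False using e by (simp add: algebra_simps)
qed

lemma leading_term_imp_expansion_D':
  assumes "leading_term d (\<lambda>e. q e i j) m c" "0 < d" "d \<le> 1" "0 < eps0"
  shows "expansion_D' eps0 q i j d"
proof -
  obtain G where "c > 0" "G \<ge> 0"
    and "\<forall>\<^sub>F e in at_right 0. \<bar>q e i j - c * e ^ m\<bar> \<le> G * e ^ m * e powr d"
    using assms(1) unfolding leading_term_def by blast
  then obtain t where "0 < t" and t: "\<forall>e. 0 < e \<longrightarrow> e < t \<longrightarrow> \<bar>q e i j - c * e ^ m\<bar> \<le> G * e ^ m * e powr d"
    unfolding eventually_at_right_field by blast
  define t' where "t' = min (t / 2) eps0"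
  have "\<bar>q e i j - (\<Sum>l=m..m. c * e ^ l)\<bar> \<le> (G + 1) * e powr (real m + d)" if "e \<in> {0<..t'}" for e
  proof -
    have "\<bar>q e i j - (\<Sum>l=m..m. c * e ^ l)\<bar> \<le> G * (e ^ m * e powr d)"
      using t that \<open>0 < t\<close> unfolding t'_def by (simp add: mult.assoc)
    also have "\<dots> \<le> (G + 1) * (e ^ m * e powr d)"
      using that by (intro mult_right_mono) auto
    finally show ?thesis using that by (simp add: powr_add powr_realpow)
  qed
  then show ?thesis
    unfolding expansion_D'_def using assms \<open>0 < t\<close> \<open>c > 0\<close> \<open>G \<ge> 0\<close>
    by (intro exI[of _ m] exI[of _ m] exI[of _ "\<lambda>_. c"] exI[of _ "G + 1"] exI[of _ t'])
      (auto simp: t'_def)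
qed

text \<open>Higher-order terms of the expansion are absorbed into the remainder.\<close>
lemma expansion_D'_imp_leading_term:
  assumes "expansion_D' eps0 q i j d"
  shows "\<exists>m c. leading_term d (\<lambda>e. q e i j) m c"
proof -
  obtain lm lp a G t where "lm \<le> lp" "a lm > 0" "0 < d" "d \<le> 1" "0 < G" "0 < t"
    and rem: "\<forall>e\<in>{0<..t}. \<bar>q e i j - (\<Sum>l=lm..lp. a l * e ^ l)\<bar> \<le> G * e powr (real lp + d)"
    using assms unfolding expansion_D'_def by blast
  define A where "A = (\<Sum>l=Suc lm..lp. \<bar>a l\<bar>)"
  have "A \<ge> 0" unfolding A_def by (simp add: sum_nonneg)
  have "\<forall>\<^sub>F e in at_right 0. \<bar>q e i j - a lm * e ^ lm\<bar> \<le> (A + G) * e ^ lm * e powr d"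
    using eventually_at_right_0_le[OF \<open>0 < t\<close>] eventually_at_right_0_le[OF zero_less_one]
  proof eventually_elim
    case (elim e)
    have "\<bar>\<Sum>l=Suc lm..lp. a l * e ^ l\<bar> \<le> (\<Sum>l=Suc lm..lp. \<bar>a l\<bar> * (e ^ lm * e powr d))"
    proof (rule order_trans[OF sum_abs sum_mono])
      fix l assume "l \<in> {Suc lm..lp}"
      then have "e ^ l \<le> e ^ lm * e powr d"
        using elim \<open>d \<le> 1\<close> by (intro power_le_power_times_powr) auto
      then show "\<bar>a l * e ^ l\<bar> \<le> \<bar>a l\<bar> * (e ^ lm * e powr d)"
        using elim by (simp add: abs_mult mult_left_mono)
    qed
    then have higher: "\<bar>\<Sum>l=Suc lm..lp. a l * e ^ l\<bar> \<le> A * (e ^ lm * e powr d)"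
      unfolding A_def by (simp add: sum_distrib_right)
    have "e ^ lp \<le> e ^ lm" using elim \<open>lm \<le> lp\<close> by (intro power_decreasing) auto
    then have "G * (e ^ lp * e powr d) \<le> G * (e ^ lm * e powr d)"
      using \<open>0 < G\<close> by (intro mult_left_mono mult_right_mono) auto
    moreover have "e powr (real lp + d) = e ^ lp * e powr d"
      using elim by (simp add: powr_add powr_realpow)
    ultimately have "G * e powr (real lp + d) \<le> G * (e ^ lm * e powr d)" by simp
    moreover have "(\<Sum>l=lm..lp. a l * e ^ l) = a lm * e ^ lm + (\<Sum>l=Suc lm..lp. a l * e ^ l)"
      using \<open>lm \<le> lp\<close> by (simp add: sum.atLeast_Suc_atMost)
    moreover have "\<bar>q e i j - (\<Sum>l=lm..lp. a l * e ^ l)\<bar> \<le> G * e powr (real lp + d)"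
      using rem elim by auto
    ultimately have "\<bar>q e i j - a lm * e ^ lm\<bar> \<le> A * (e ^ lm * e powr d) + G * (e ^ lm * e powr d)"
      using higher by linarith
    then show ?case by (simp add: algebra_simps)
  qed
  then show ?thesis
    unfolding leading_term_def using \<open>a lm > 0\<close> \<open>A \<ge> 0\<close> \<open>0 < G\<close>
    by (intro exI[of _ lm] exI[of _ "a lm"] conjI exI[of _ "A + G"]) auto
qed

section \<open>Transition graphs\<close>

definition transition_rel :: "('a \<Rightarrow> 'a set) \<Rightarrow> ('a \<times> 'a) set" where
  "transition_rel Y = {(a, b). b \<in> Y a}"

lemma path_iff_trancl_transition_rel:
  "(\<exists>(n::nat) l. n \<ge> 1 \<and> l 0 = a \<and> l n = b \<and> (\<forall>m\<in>{1..n}. l m \<in> Y (l (m - 1))))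
    \<longleftrightarrow> (a, b) \<in> (transition_rel Y)\<^sup>+"
proof -
  have steps: "(\<forall>m\<in>{1..n}. l m \<in> Y (l (m - 1))) \<longleftrightarrow> (\<forall>i<n. (l i, l (Suc i)) \<in> transition_rel Y)"
    for n :: nat and l
  proof
    assume steps: "\<forall>m\<in>{1..n}. l m \<in> Y (l (m - 1))"
    show "\<forall>i<n. (l i, l (Suc i)) \<in> transition_rel Y"
      using steps[rule_format, of "Suc _"] by (simp add: transition_rel_def)
  next
    assume steps: "\<forall>i<n. (l i, l (Suc i)) \<in> transition_rel Y"
    show "\<forall>m\<in>{1..n}. l m \<in> Y (l (m - 1))"
    proof
      fix m assume "m \<in> {1..n}"
      then obtain i where "m = Suc i" "i < n" by (cases m) auto
      then show "l m \<in> Y (l (m - 1))" using steps by (simp add: transition_rel_def)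
    qed
  qed
  show ?thesis
    unfolding trancl_power relpow_fun_conv steps by (auto simp: Suc_le_eq)
qed

lemma trancl_transition_rel_closed:
  assumes "(a, b) \<in> (transition_rel Y)\<^sup>+" "\<forall>i\<in>S. Y i \<subseteq> S" "a \<in> S"
  shows "b \<in> S"
  using assms(1) by induction (use assms(2,3) in \<open>auto simp: transition_rel_def\<close>)

text \<open>A path of the original chain from a state other than r is shadowed by a path of the
  reduced chain; a visit to r is bridged by the reduced transition from the state before r.\<close>
lemma trancl_reduced_transition_rel:
  assumes "(a, b) \<in> (transition_rel Y)\<^sup>+" "\<forall>i\<in>S. Y i \<subseteq> S" "a \<in> S - {r}"
  shows "(b \<noteq> r \<longrightarrow> (a, b) \<in> (transition_rel (reduced_Y S Y r))\<^sup>+) \<and>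
    (b = r \<longrightarrow> (\<exists>c\<in>S - {r}. (a, c) \<in> (transition_rel (reduced_Y S Y r))\<^sup>* \<and> r \<in> Y c))"
  using assms(1)
proof (induction rule: trancl_induct)
  case (base b)
  then show ?case
    using assms(2,3) by (auto simp: transition_rel_def reduced_Y_def intro!: r_into_trancl)
next
  case (step b z)
  have "b \<in> S" using trancl_transition_rel_closed[OF step(1) assms(2)] assms(3) by blast
  moreover have z: "z \<in> Y b" using step(2) unfolding transition_rel_def by simp
  ultimately have "z \<in> S" using assms(2) by blast
  show ?case
  proof (cases "b = r")
    case False
    with step.IH \<open>b \<in> S\<close> z \<open>z \<in> S\<close> show ?thesis
      by (auto simp: transition_rel_def reduced_Y_def intro: trancl_into_trancl trancl_into_rtrancl)
  next
    case True
    with step.IH z \<open>z \<in> S\<close> show ?thesis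
      by (auto simp: transition_rel_def reduced_Y_def intro: rtrancl_into_trancl1)
  qed
qed

section \<open>Removing a state from a perturbed chain\<close>

locale perturbed_chain =
  fixes S :: "nat set" and eps0 :: real and p :: "real \<Rightarrow> nat \<Rightarrow> nat \<Rightarrow> real"
    and Y :: "nat \<Rightarrow> nat set"
  assumes finite_S: "finite S" and eps0_pos: "0 < eps0"
    and stochastic: "stochastic_family S eps0 p"
    and condition_A: "condition_A S eps0 p Y"
begin

lemma Y_subset: "i \<in> S \<Longrightarrow> Y i \<subseteq> S"
  and Y_nonempty: "i \<in> S \<Longrightarrow> Y i \<noteq> {}"
  and p_pos: "i \<in> S \<Longrightarrow> j \<in> Y i \<Longrightarrow> e \<in> {0<..eps0} \<Longrightarrow> 0 < p e i j"
  and p_zero: "i \<in> S \<Longrightarrow> j \<in> S \<Longrightarrow> j \<notin> Y i \<Longrightarrow> e \<in> {0<..eps0} \<Longrightarrow> p e i j = 0"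
  and irreducible: "i \<in> S \<Longrightarrow> j \<in> S \<Longrightarrow> (i, j) \<in> (transition_rel Y)\<^sup>+"
  using condition_A unfolding condition_A_def path_iff_trancl_transition_rel by blast+

lemma p_nonneg: "i \<in> S \<Longrightarrow> j \<in> S \<Longrightarrow> e \<in> {0<..eps0} \<Longrightarrow> 0 \<le> p e i j"
  and row_sum: "i \<in> S \<Longrightarrow> e \<in> {0<..eps0} \<Longrightarrow> (\<Sum>j\<in>S. p e i j) = 1"
  using stochastic unfolding stochastic_family_def by blast+

lemma eventually_in_range: "\<forall>\<^sub>F e in at_right 0. e \<in> {0<..eps0}"
  using eventually_at_right_0_le[OF eps0_pos] by simp

lemma one_minus_diag_eq_sum:
  assumes "r \<in> S" "e \<in> {0<..eps0}"
  shows "1 - p e r r = (\<Sum>j\<in>S - {r}. p e r j)"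
  using row_sum[OF assms] finite_S assms(1) by (simp add: sum.remove)

lemma one_minus_diag_eq_sum_exits:
  assumes "r \<in> S" "e \<in> {0<..eps0}"
  shows "1 - p e r r = (\<Sum>j\<in>Y r - {r}. p e r j)"
  unfolding one_minus_diag_eq_sum[OF assms]
  using finite_S Y_subset[OF assms(1)] p_zero[OF assms(1) _ _ assms(2)]
  by (intro sum.mono_neutral_right) auto

lemma le_one_minus_diag:
  assumes "r \<in> S" "j \<in> S - {r}" "e \<in> {0<..eps0}"
  shows "p e r j \<le> 1 - p e r r"
  unfolding one_minus_diag_eq_sum[OF assms(1,3)]
  using finite_S assms p_nonneg by (intro member_le_sum) auto

lemma leading_terms_Min_exponent:
  assumes "S \<noteq> {}" and expansions: "\<forall>i\<in>S. \<forall>j\<in>Y i. expansion_D' eps0 p i j (\<delta> i j)"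
  defines "d0 \<equiv> Min {\<delta> i j | i j. i \<in> S \<and> j \<in> Y i}"
  shows "0 < d0" "d0 \<le> 1" "\<And>i j. i \<in> S \<Longrightarrow> j \<in> Y i \<Longrightarrow> \<exists>m c. leading_term d0 (\<lambda>e. p e i j) m c"
proof -
  let ?D = "{\<delta> i j | i j. i \<in> S \<and> j \<in> Y i}"
  have "?D = (\<lambda>(i, j). \<delta> i j) ` (SIGMA i:S. Y i)" by auto
  moreover have "finite (SIGMA i:S. Y i)"
    using finite_S Y_subset by (intro finite_SigmaI) (auto intro: finite_subset)
  ultimately have "finite ?D" by simp
  moreover have "?D \<noteq> {}" using assms(1) Y_nonempty by blast
  moreover have "\<forall>x\<in>?D. 0 < x \<and> x \<le> 1" using expansions unfolding expansion_D'_def by blast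
  ultimately show "0 < d0" "d0 \<le> 1" using Min_in unfolding d0_def by blast+
  fix i j assume "i \<in> S" "j \<in> Y i"
  then have "d0 \<le> \<delta> i j" unfolding d0_def using \<open>finite ?D\<close> by (intro Min_le) blast+
  moreover obtain m c where "leading_term (\<delta> i j) (\<lambda>e. p e i j) m c"
    using expansion_D'_imp_leading_term expansions \<open>i \<in> S\<close> \<open>j \<in> Y i\<close> by blast
  ultimately show "\<exists>m c. leading_term d0 (\<lambda>e. p e i j) m c"
    using leading_term_mono_powr \<open>0 < d0\<close> by blast
qed

context
  fixes r :: nat
  assumes r: "r \<in> S" and nontrivial: "S - {r} \<noteq> {}"
begin

text \<open>Irreducibility forces a transition out of r, since otherwise {r} would be closed.\<close>
lemma exit_exists: "\<exists>x\<in>Y r. x \<noteq> r"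
proof (rule ccontr)
  assume "\<not> ?thesis"
  then have closed: "\<forall>i\<in>{r}. Y i \<subseteq> {r}" by blast
  obtain s where s: "s \<in> S" "s \<noteq> r" using nontrivial by blast
  then have "s \<in> {r}"
    using trancl_transition_rel_closed[OF irreducible[OF r s(1)] closed] by simp
  with s show False by simp
qed

lemma diag_less_one:
  assumes "e \<in> {0<..eps0}"
  shows "p e r r < 1"
proof -
  obtain x where "x \<in> Y r" "x \<noteq> r" using exit_exists by blast
  then have "0 < p e r x" "p e r x \<le> 1 - p e r r"
    using p_pos[OF r _ assms] le_one_minus_diag[OF r _ assms] Y_subset[OF r] by auto
  then show ?thesis by linarith
qed

lemma reduced_Y_nonempty:
  assumes "i \<in> S - {r}"
  shows "reduced_Y S Y r i \<noteq> {}"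
proof -
  obtain y where y: "y \<in> Y i" using Y_nonempty assms by blast
  obtain x where x: "x \<in> Y r" "x \<noteq> r" using exit_exists by blast
  show ?thesis
    using x y Y_subset assms r unfolding reduced_Y_def by (cases "y = r") auto
qed

lemma reduced_p_pos:
  assumes "i \<in> S - {r}" "j \<in> reduced_Y S Y r i" "e \<in> {0<..eps0}"
  shows "0 < reduced_p p r e i j"
proof -
  have "j \<in> S" using assms(2) unfolding reduced_Y_def by simp
  then have "0 \<le> p e i j" "0 \<le> p e i r" "0 \<le> p e r j" "0 < 1 - p e r r"
    using assms p_nonneg r diag_less_one by auto
  moreover have "0 < p e i j \<or> (0 < p e i r \<and> 0 < p e r j)"
    using assms p_pos r unfolding reduced_Y_def by auto
  ultimately show ?thesis
    unfolding reduced_p_def by (smt (verit) divide_nonneg_pos divide_pos_pos mult_nonneg_nonneg mult_pos_pos)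
qed

lemma reduced_p_zero:
  assumes "i \<in> S - {r}" "j \<in> S - {r}" "j \<notin> reduced_Y S Y r i" "e \<in> {0<..eps0}"
  shows "reduced_p p r e i j = 0"
  using assms p_zero r unfolding reduced_p_def reduced_Y_def by auto

lemma reduced_irreducible:
  assumes "i \<in> S - {r}" "j \<in> S - {r}"
  shows "(i, j) \<in> (transition_rel (reduced_Y S Y r))\<^sup>+"
  using trancl_reduced_transition_rel[OF irreducible] Y_subset assms by blast

lemma condition_A_reduced: "condition_A (S - {r}) eps0 (reduced_p p r) (reduced_Y S Y r)"
proof -
  have "reduced_Y S Y r i \<subseteq> S - {r}" for i unfolding reduced_Y_def by blast
  then show ?thesis
    unfolding condition_A_def path_iff_trancl_transition_rel
    using reduced_Y_nonempty reduced_p_pos reduced_p_zero reduced_irreducible by blast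
qed

context
  fixes d :: real
  assumes d: "0 < d" "d \<le> 1"
    and leading_terms: "\<And>i j. i \<in> S \<Longrightarrow> j \<in> Y i \<Longrightarrow> \<exists>m c. leading_term d (\<lambda>e. p e i j) m c"
begin

lemma leading_term_one_minus_diag: "\<exists>m c. leading_term d (\<lambda>e. 1 - p e r r) m c"
proof -
  have "\<exists>m c. leading_term d (\<lambda>e. \<Sum>j\<in>Y r - {r}. p e r j) m c"
    using exit_exists finite_S Y_subset[OF r] leading_terms[OF r] d(2)
    by (intro leading_term_sum_ex) (auto intro: finite_subset)
  then obtain m c where "leading_term d (\<lambda>e. \<Sum>j\<in>Y r - {r}. p e r j) m c" by blast
  moreover have "\<forall>\<^sub>F e in at_right 0. (\<Sum>j\<in>Y r - {r}. p e r j) = 1 - p e r r"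
    using eventually_in_range by eventually_elim (simp add: one_minus_diag_eq_sum_exits[OF r])
  ultimately have "leading_term d (\<lambda>e. 1 - p e r r) m c" by (rule leading_term_cong)
  then show ?thesis by blast
qed

lemma leading_term_exit_ratio:
  assumes "j \<in> Y r" "j \<noteq> r"
  shows "\<exists>m c. leading_term d (\<lambda>e. p e r j / (1 - p e r r)) m c"
proof -
  obtain m c where m: "leading_term d (\<lambda>e. p e r j) m c" using leading_terms[OF r assms(1)] by blast
  obtain mh ch where mh: "leading_term d (\<lambda>e. 1 - p e r r) mh ch"
    using leading_term_one_minus_diag by blast
  have "\<forall>\<^sub>F e in at_right 0. p e r j \<le> 1 - p e r r"
    using eventually_in_range
    by eventually_elim (use le_one_minus_diag[OF r] assms Y_subset[OF r] in blast)
  then have "mh \<le> m" using leading_term_exponent_le[OF m mh d(1)] by blast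
  then show ?thesis using leading_term_divide[OF m mh _ d(1)] by blast
qed

lemma leading_term_reduced_p:
  assumes i: "i \<in> S - {r}" and j: "j \<in> reduced_Y S Y r i"
  shows "\<exists>m c. leading_term d (\<lambda>e. reduced_p p r e i j) m c"
proof -
  have "j \<in> S" "j \<noteq> r" using j unfolding reduced_Y_def by auto
  let ?via_r = "\<lambda>e. p e i r * (p e r j / (1 - p e r r))"
  show ?thesis
  proof (cases "r \<in> Y i \<and> j \<in> Y r")
    case True
    obtain m1 c1 where "leading_term d (\<lambda>e. p e i r) m1 c1" using leading_terms i True by blast
    moreover obtain m2 c2 where "leading_term d (\<lambda>e. p e r j / (1 - p e r r)) m2 c2"
      using leading_term_exit_ratio True \<open>j \<noteq> r\<close> by blast
    ultimately have via_r: "leading_term d ?via_r (m1 + m2) (c1 * c2)"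
      using leading_term_mult d(1) by blast
    show ?thesis
    proof (cases "j \<in> Y i")
      case True
      then obtain m3 c3 where "leading_term d (\<lambda>e. p e i j) m3 c3" using leading_terms i by blast
      from leading_term_add_ex[OF this via_r d(2)] show ?thesis unfolding reduced_p_def .
    next
      case False
      have "\<forall>\<^sub>F e in at_right 0. ?via_r e = reduced_p p r e i j"
        using eventually_in_range
        by eventually_elim (use p_zero i \<open>j \<in> S\<close> False in \<open>simp add: reduced_p_def\<close>)
      from leading_term_cong[OF via_r this] show ?thesis by blast
    qed
  next
    case False
    then have "j \<in> Y i" using j unfolding reduced_Y_def by blast
    then obtain m3 c3 where direct: "leading_term d (\<lambda>e. p e i j) m3 c3" using leading_terms i by blast
    have "\<forall>\<^sub>F e in at_right 0. p e i j = reduced_p p r e i j"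
      using eventually_in_range
      by eventually_elim (use p_zero i r \<open>j \<in> S\<close> False in \<open>auto simp: reduced_p_def\<close>)
    from leading_term_cong[OF direct this] show ?thesis by blast
  qed
qed

lemma expansion_D'_reduced:
  assumes "i \<in> S - {r}" "j \<in> reduced_Y S Y r i"
  shows "expansion_D' eps0 (reduced_p p r) i j d"
  using leading_term_reduced_p[OF assms] leading_term_imp_expansion_D' d eps0_pos by blast

end

end

lemma reduced_chain_conditions:
  assumes r: "r \<in> S" "S - {r} \<noteq> {}"
    and expansions: "\<forall>i\<in>S. \<forall>j\<in>Y i. expansion_D' eps0 p i j (\<delta> i j)"
  shows "condition_A (S - {r}) eps0 (reduced_p p r) (reduced_Y S Y r) \<and>
    condition_D' (S - {r}) eps0 (reduced_p p r) (reduced_Y S Y r) \<and>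
    (\<forall>i\<in>S - {r}. \<forall>j\<in>reduced_Y S Y r i.
       \<exists>d. d \<ge> Min {\<delta> i' j' | i' j'. i' \<in> S \<and> j' \<in> Y i'} \<and>
           expansion_D' eps0 (reduced_p p r) i j d)"
proof -
  have "S \<noteq> {}" using r by blast
  note d0 = leading_terms_Min_exponent[OF this expansions]
  show ?thesis
    using condition_A_reduced[OF r] expansion_D'_reduced[OF r d0] unfolding condition_D'_def by blast
qed

end

theorem theorem1:
  fixes N :: nat and eps0 :: real
    and p :: "real \<Rightarrow> nat \<Rightarrow> nat \<Rightarrow> real"
    and Y :: "nat \<Rightarrow> nat set"
    and \<delta> :: "nat \<Rightarrow> nat \<Rightarrow> real"
  assumes "N \<ge> 2"
    and "0 < eps0" and "eps0 \<le> 1"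
    and "stochastic_family {1..N} eps0 p"
    and "condition_A {1..N} eps0 p Y"
    and "\<forall>i\<in>{1..N}. \<forall>j\<in>Y i. expansion_D' eps0 p i j (\<delta> i j)"
  shows "\<forall>r\<in>{1..N}.
           condition_A ({1..N} - {r}) eps0 (reduced_p p r) (reduced_Y {1..N} Y r) \<and>
           condition_D' ({1..N} - {r}) eps0 (reduced_p p r) (reduced_Y {1..N} Y r) \<and>
           (\<forall>i\<in>{1..N} - {r}. \<forall>j\<in>reduced_Y {1..N} Y r i.
              \<exists>d. d \<ge> Min {\<delta> i' j' | i' j'. i' \<in> {1..N} \<and> j' \<in> Y i'} \<and>
                  expansion_D' eps0 (reduced_p p r) i j d)"
proof -
  interpret perturbed_chain "{1..N}" eps0 p Y
    using assms by unfold_locales auto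
  have "{1..N} - {r} \<noteq> {}" for r
  proof -
    have "(if r = 1 then 2 else 1) \<in> {1..N} - {r}" using \<open>N \<ge> 2\<close> by auto
    then show ?thesis by blast
  qed
  then show ?thesis using reduced_chain_conditions assms(6) by blast
qed

end
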